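(* In the setting of the context, if $a,b\in C$ are distinct and $g\in G_a$ is non-trivial, then $$d_a(b,gb)\ge 2^{\frac{R-2}{\delta}}-4-6\delta.$$
   Context: $X$ is a $\delta$-hyperbolic geodesic metric space ($\delta>0$, every geodesic triangle $\delta$-thin). $G$ acts on $X$ by isometries and $\mathcal{C}=(C,\{G_c\})$ is a $\rho$-separated fairly rotating family with $\rho\ge20\delta$ (i.e. $C\subseteq X$ is $G$-invariant, $G_c$ fixes $c$, $G_{gc}=gG_cg^{-1}$, distinct points of $C$ are at distance $\ge\rho$, and for $c\in C$, $g\in G_c\setminus\{1\}$, $x\in C\setminus\{c\}$ some geodesic from $x$ to $gx$ meets the closed $1$-ball about $c$). Fix $2+2\delta\le R\le\frac\rho2-3\delta$; $B_r(p)$ denotes the open ball. For $p\in C$, $S_p=\{x:d(x,p)=R\}$ with metric $d_{S_p}(x,y)=$ infimum of lengths of paths from $x$ to $y$ in $X\setminus B_R(p)$ (possibly $\infty$). For $x\in C\setminus\{p\}$, $\pi_p(x)\subseteq S_p$ is the set of points where geodesics $[p,x]$ meet $S_p$, and $d_p(x,y)=\operatorname{diam}_{S_p}(\pi_p(x)\cup\pi_p(y))$. *)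

theory Defs
  imports "HOL-Analysis.Analysis" "HOL-Algebra.Group"
begin

text \<open>The metric space X is the whole of the type 'a.\<close>

definition geodesic :: "(real \<Rightarrow> 'a::metric_space) \<Rightarrow> 'a \<Rightarrow> 'a \<Rightarrow> bool" where
  "geodesic \<gamma> x y \<longleftrightarrow> \<gamma> 0 = x \<and> \<gamma> (dist x y) = y \<and>
     (\<forall>s\<in>{0..dist x y}. \<forall>t\<in>{0..dist x y}. dist (\<gamma> s) (\<gamma> t) = \<bar>s - t\<bar>)"

definition geodesic_space :: "'a::metric_space itself \<Rightarrow> bool" where
  "geodesic_space _ \<longleftrightarrow> (\<forall>x y::'a. \<exists>\<gamma>. geodesic \<gamma> x y)"

definition gromov_product :: "'a::metric_space \<Rightarrow> 'a \<Rightarrow> 'a \<Rightarrow> real" where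
  "gromov_product x y z = (dist x y + dist x z - dist y z) / 2"

definition delta_hyperbolic :: "'a::metric_space itself \<Rightarrow> real \<Rightarrow> bool" where
  "delta_hyperbolic T \<delta> \<longleftrightarrow> geodesic_space T \<and>
     (\<forall>x y z::'a. \<forall>\<alpha> \<beta>. geodesic \<alpha> x y \<longrightarrow> geodesic \<beta> x z \<longrightarrow>
        (\<forall>t. 0 \<le> t \<and> t \<le> gromov_product x y z \<longrightarrow> dist (\<alpha> t) (\<beta> t) \<le> \<delta>))"

definition isometric_action :: "('g, 'b) monoid_scheme \<Rightarrow> ('g \<Rightarrow> 'a::metric_space \<Rightarrow> 'a) \<Rightarrow> bool" where
  "isometric_action G act \<longleftrightarrow> group G \<and>
     (\<forall>x. act \<one>\<^bsub>G\<^esub> x = x) \<and>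
     (\<forall>g\<in>carrier G. \<forall>h\<in>carrier G. \<forall>x. act (g \<otimes>\<^bsub>G\<^esub> h) x = act g (act h x)) \<and>
     (\<forall>g\<in>carrier G. \<forall>x y. dist (act g x) (act g y) = dist x y)"

definition fairly_rotating_family ::
  "('g, 'b) monoid_scheme \<Rightarrow> ('g \<Rightarrow> 'a::metric_space \<Rightarrow> 'a) \<Rightarrow> 'a set \<Rightarrow> ('a \<Rightarrow> 'g set) \<Rightarrow> real \<Rightarrow> bool" where
  "fairly_rotating_family G act C Gc \<rho> \<longleftrightarrow>
     (\<forall>g\<in>carrier G. \<forall>c\<in>C. act g c \<in> C) \<and>
     (\<forall>c\<in>C. subgroup (Gc c) G) \<and>
     (\<forall>c\<in>C. \<forall>g\<in>Gc c. act g c = c) \<and>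
     (\<forall>g\<in>carrier G. \<forall>c\<in>C. Gc (act g c) = (\<lambda>h. g \<otimes>\<^bsub>G\<^esub> h \<otimes>\<^bsub>G\<^esub> inv\<^bsub>G\<^esub> g) ` Gc c) \<and>
     (\<forall>c\<in>C. \<forall>c'\<in>C. c \<noteq> c' \<longrightarrow> dist c c' \<ge> \<rho>) \<and>
     (\<forall>c\<in>C. \<forall>g\<in>Gc c. g \<noteq> \<one>\<^bsub>G\<^esub> \<longrightarrow> (\<forall>x\<in>C - {c}.
        \<exists>\<gamma>. geodesic \<gamma> x (act g x) \<and> (\<exists>t\<in>{0..dist x (act g x)}. dist (\<gamma> t) c \<le> 1)))"

definition curve_length :: "(real \<Rightarrow> 'a::metric_space) \<Rightarrow> ereal" where
  "curve_length \<gamma> = (SUP nt \<in> {(n::nat, t::nat \<Rightarrow> real). t 0 = 0 \<and> t n = 1 \<and> (\<forall>i<n. t i \<le> t (Suc i))}.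
      ereal (\<Sum>i<fst nt. dist (\<gamma> (snd nt i)) (\<gamma> (snd nt (Suc i)))))"

definition sphere_set :: "'a::metric_space \<Rightarrow> real \<Rightarrow> 'a set" where
  "sphere_set p R = {x. dist x p = R}"

text \<open>Induced path metric on S_p: infimum of lengths of paths in X \ B_R(p); \<infinity> if none.\<close>
definition sphere_dist :: "real \<Rightarrow> 'a::metric_space \<Rightarrow> 'a \<Rightarrow> 'a \<Rightarrow> ereal" where
  "sphere_dist R p x y = (INF \<gamma> \<in> {\<gamma>. continuous_on {0..1} \<gamma> \<and> \<gamma> 0 = x \<and> \<gamma> 1 = y \<and>
       \<gamma> ` {0..1} \<subseteq> - ball p R}. curve_length \<gamma>)"

definition proj :: "real \<Rightarrow> 'a::metric_space \<Rightarrow> 'a \<Rightarrow> 'a set" where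
  "proj R p x = {y \<in> sphere_set p R. \<exists>\<gamma>. geodesic \<gamma> p x \<and> y \<in> \<gamma> ` {0..dist p x}}"

definition proj_dist :: "real \<Rightarrow> 'a::metric_space \<Rightarrow> 'a \<Rightarrow> 'a \<Rightarrow> ereal" where
  "proj_dist R p x y = (let A = proj R p x \<union> proj R p y in
       (SUP u \<in> A. SUP v \<in> A. sphere_dist R p u v))"

end

theory Submission
  imports Defs
begin

text \<open>The geodesic [b, gb] passes within 1 of a, and by thinness of the triangle (a, b, gb)
  it fellow-travels [a, b] and [a, gb] up to distance R + \<delta> from a. A path of length L in
  X \<setminus> B_R(a) from u \<in> [a, b] to gu \<in> [a, gb], extended by four segments of length \<delta>
  outside B_R(a), therefore joins two points of [b, gb] lying on either side of the point near a.
  Bisecting a path of length \<ell> N times and using slim triangles at each level shows that every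
  point of a geodesic between its endpoints is within N \<delta> + \<ell> / 2^(N+1) of the path. Hence
  R - 1 \<le> N \<delta> + (L + 4\<delta>) / 2^(N+1) for all N, and N \<approx> (R - 2) / \<delta> gives
  L + 4\<delta> \<ge> 2 powr ((R - 2) / \<delta>).\<close>

lemma geodesic_dist:
  assumes "geodesic \<gamma> x y" "s \<in> {0..dist x y}" "t \<in> {0..dist x y}"
  shows "dist (\<gamma> s) (\<gamma> t) = \<bar>s - t\<bar>"
  using assms unfolding geodesic_def by blast

lemma geodesic_start: "geodesic \<gamma> x y \<Longrightarrow> \<gamma> 0 = x"
  unfolding geodesic_def by blast

lemma geodesic_end: "geodesic \<gamma> x y \<Longrightarrow> \<gamma> (dist x y) = y"
  unfolding geodesic_def by blast

lemma geodesic_dist_start: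
  assumes "geodesic \<gamma> x y" "0 \<le> s" "s \<le> dist x y"
  shows "dist (\<gamma> s) x = s"
  using geodesic_dist[OF assms(1), of s 0] geodesic_start[OF assms(1)] assms by simp

lemma geodesic_dist_end:
  assumes "geodesic \<gamma> x y" "0 \<le> s" "s \<le> dist x y"
  shows "dist (\<gamma> s) y = dist x y - s"
  using geodesic_dist[OF assms(1), of s "dist x y"] geodesic_end[OF assms(1)] assms by simp

lemma geodesic_reverse:
  assumes "geodesic \<gamma> x y"
  shows "geodesic (\<lambda>t. \<gamma> (dist x y - t)) y x"
proof -
  have "dist (\<gamma> (dist x y - s)) (\<gamma> (dist x y - t)) = \<bar>s - t\<bar>"
    if "s \<in> {0..dist y x}" "t \<in> {0..dist y x}" for s t
    using geodesic_dist[OF assms, of "dist x y - s" "dist x y - t"] that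
    by (auto simp: dist_commute)
  then show ?thesis
    using geodesic_start[OF assms] geodesic_end[OF assms]
    unfolding geodesic_def by (auto simp: dist_commute)
qed

lemma geodesic_subsegment:
  assumes "geodesic \<gamma> x y" "0 \<le> r" "r \<le> r'" "r' \<le> dist x y"
  shows "geodesic (\<lambda>t. \<gamma> (r + t)) (\<gamma> r) (\<gamma> r')"
proof -
  have len: "dist (\<gamma> r) (\<gamma> r') = r' - r"
    using geodesic_dist[OF assms(1), of r r'] assms by simp
  have "dist (\<gamma> (r + s)) (\<gamma> (r + t)) = \<bar>s - t\<bar>" if "s \<in> {0..r' - r}" "t \<in> {0..r' - r}" for s t
    using geodesic_dist[OF assms(1), of "r + s" "r + t"] that assms by auto
  then show ?thesis
    unfolding geodesic_def len by auto
qed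

lemma geodesic_isometric_image:
  assumes "geodesic \<gamma> x y" "\<And>u v. dist (f u) (f v) = dist u v"
  shows "geodesic (\<lambda>t. f (\<gamma> t)) (f x) (f y)"
  using assms unfolding geodesic_def by auto

lemma gromov_product_le_dist: "gromov_product x y z \<le> dist x y"
  unfolding gromov_product_def using dist_triangle[of x z y] by (simp add: dist_commute)

section \<open>Thin and slim triangles\<close>

lemma delta_hyperbolic_geodesic_exists:
  "delta_hyperbolic TYPE('a::metric_space) \<delta> \<Longrightarrow> \<exists>\<gamma>. geodesic \<gamma> x (y::'a)"
  unfolding delta_hyperbolic_def geodesic_space_def by blast

lemma delta_hyperbolic_thin:
  assumes "delta_hyperbolic TYPE('a::metric_space) \<delta>"
    and "geodesic \<alpha> x (y::'a)" "geodesic \<beta> x z" "0 \<le> t" "t \<le> gromov_product x y z"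
  shows "dist (\<alpha> t) (\<beta> t) \<le> \<delta>"
  using assms unfolding delta_hyperbolic_def by blast

lemma delta_hyperbolic_slim:
  assumes hyp: "delta_hyperbolic TYPE('a::metric_space) \<delta>"
    and \<alpha>: "geodesic \<alpha> x z" and \<alpha>1: "geodesic \<alpha>1 x (y::'a)" and \<alpha>2: "geodesic \<alpha>2 y z"
    and t: "0 \<le> t" "t \<le> dist x z"
  shows "(\<exists>t1\<in>{0..dist x y}. dist (\<alpha> t) (\<alpha>1 t1) \<le> \<delta>) \<or>
         (\<exists>t2\<in>{0..dist y z}. dist (\<alpha> t) (\<alpha>2 t2) \<le> \<delta>)"
proof (cases "t \<le> gromov_product x y z")
  case True
  then have "dist (\<alpha>1 t) (\<alpha> t) \<le> \<delta>"
    using delta_hyperbolic_thin[OF hyp \<alpha>1 \<alpha>] t by blast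
  moreover have "t \<le> dist x y"
    using True gromov_product_le_dist[of x y z] by linarith
  ultimately show ?thesis
    using t by (auto simp: dist_commute)
next
  case False
  define t' where "t' = dist x z - t"
  have "gromov_product z y x = dist x z - gromov_product x y z"
    unfolding gromov_product_def by (simp add: dist_commute field_simps)
  then have t': "0 \<le> t'" "t' \<le> gromov_product z y x"
    using False t unfolding t'_def by linarith+
  have "dist (\<alpha>2 (dist y z - t')) (\<alpha> (dist x z - t')) \<le> \<delta>"
    using delta_hyperbolic_thin[OF hyp geodesic_reverse[OF \<alpha>2] geodesic_reverse[OF \<alpha>] t']
    by simp
  moreover have "t' \<le> dist z y"
    using t' gromov_product_le_dist[of z y x] by linarith
  moreover have "dist x z - t' = t"
    unfolding t'_def by simp
  ultimately show ?thesis
    using t' by (auto simp: dist_commute intro!: bexI[of _ "dist y z - t'"])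
qed

section \<open>Discrete chains\<close>

text \<open>Paths are only used through their \<epsilon>-fine discretisations.\<close>

definition eps_chain :: "'a::metric_space set \<Rightarrow> real \<Rightarrow> 'a \<Rightarrow> 'a \<Rightarrow> real \<Rightarrow> bool" where
  "eps_chain K \<epsilon> x y S \<longleftrightarrow> (\<exists>f n. f 0 = x \<and> f n = y \<and> (\<forall>i\<le>n. f i \<in> K) \<and>
     (\<forall>i<n. dist (f i) (f (Suc i)) \<le> \<epsilon>) \<and> (\<Sum>i<n. dist (f i) (f (Suc i))) \<le> S)"

lemma eps_chainI:
  assumes "f 0 = x" "f n = y" "\<And>i. i \<le> n \<Longrightarrow> f i \<in> K"
    "\<And>i. i < n \<Longrightarrow> dist (f i) (f (Suc i)) \<le> \<epsilon>" "(\<Sum>i<n. dist (f i) (f (Suc i))) \<le> S"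
  shows "eps_chain K \<epsilon> x y S"
  unfolding eps_chain_def using assms by blast

lemma eps_chainE:
  assumes "eps_chain K \<epsilon> x y S"
  obtains f n where "f 0 = x" "f n = y" "\<And>i. i \<le> n \<Longrightarrow> f i \<in> K"
    "\<And>i. i < n \<Longrightarrow> dist (f i) (f (Suc i)) \<le> \<epsilon>" "(\<Sum>i<n. dist (f i) (f (Suc i))) \<le> S"
  using assms unfolding eps_chain_def by blast

lemma eps_chain_mono: "eps_chain K \<epsilon> x y S \<Longrightarrow> S \<le> S' \<Longrightarrow> eps_chain K \<epsilon> x y S'"
  unfolding eps_chain_def by (metis order_trans)

lemma eps_chain_append:
  assumes "eps_chain K \<epsilon> x y S1" "eps_chain K \<epsilon> y z S2"
  shows "eps_chain K \<epsilon> x z (S1 + S2)"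
proof -
  obtain f n1 where f: "f 0 = x" "f n1 = y" "\<And>i. i \<le> n1 \<Longrightarrow> f i \<in> K"
    "\<And>i. i < n1 \<Longrightarrow> dist (f i) (f (Suc i)) \<le> \<epsilon>" "(\<Sum>i<n1. dist (f i) (f (Suc i))) \<le> S1"
    using assms(1) by (rule eps_chainE) blast
  obtain h n2 where h: "h 0 = y" "h n2 = z" "\<And>i. i \<le> n2 \<Longrightarrow> h i \<in> K"
    "\<And>i. i < n2 \<Longrightarrow> dist (h i) (h (Suc i)) \<le> \<epsilon>" "(\<Sum>i<n2. dist (h i) (h (Suc i))) \<le> S2"
    using assms(2) by (rule eps_chainE) blast
  define F where "F i = (if i \<le> n1 then f i else h (i - n1))" for i
  have F_tail: "F i = h (i - n1)" if "n1 \<le> i" for i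
    using that f(2) h(1) unfolding F_def by auto
  have step: "dist (F i) (F (Suc i)) = (if i < n1 then dist (f i) (f (Suc i))
      else dist (h (i - n1)) (h (Suc (i - n1))))" for i
    using F_tail[of i] F_tail[of "Suc i"] by (auto simp: F_def Suc_diff_le)
  show ?thesis
  proof (rule eps_chainI[of F])
    show "F 0 = x" "F (n1 + n2) = z"
      using f(1) h(2) F_tail[of "n1 + n2"] by (simp_all add: F_def)
    show "F i \<in> K" if "i \<le> n1 + n2" for i
      using that f(3) h(3) F_tail[of i] unfolding F_def by (cases "i \<le> n1") auto
    show "dist (F i) (F (Suc i)) \<le> \<epsilon>" if "i < n1 + n2" for i
      using that f(4) h(4) step[of i] by auto
    have "(\<Sum>i<n1+n2. dist (F i) (F (Suc i)))
        = (\<Sum>i<n1. dist (F i) (F (Suc i))) + (\<Sum>i=n1..<n1+n2. dist (F i) (F (Suc i)))"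
      using sum.atLeastLessThan_concat[of 0 n1 "n1+n2" "\<lambda>i. dist (F i) (F (Suc i))"]
      by (simp add: atLeast0LessThan)
    also have "(\<Sum>i=n1..<n1+n2. dist (F i) (F (Suc i))) = (\<Sum>i<n2. dist (h i) (h (Suc i)))"
      using sum.shift_bounds_nat_ivl[of "\<lambda>i. dist (F i) (F (Suc i))" 0 n1 n2] step
      by (simp add: atLeast0LessThan add.commute)
    also have "(\<Sum>i<n1. dist (F i) (F (Suc i))) = (\<Sum>i<n1. dist (f i) (f (Suc i)))"
      using step by simp
    finally show "(\<Sum>i<n1+n2. dist (F i) (F (Suc i))) \<le> S1 + S2"
      using f(5) h(5) by linarith
  qed
qed

lemma eps_chain_sym:
  assumes "eps_chain K \<epsilon> x y S"
  shows "eps_chain K \<epsilon> y x S"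
proof -
  obtain f n where f: "f 0 = x" "f n = y" "\<And>i. i \<le> n \<Longrightarrow> f i \<in> K"
    "\<And>i. i < n \<Longrightarrow> dist (f i) (f (Suc i)) \<le> \<epsilon>" "(\<Sum>i<n. dist (f i) (f (Suc i))) \<le> S"
    using assms by (rule eps_chainE) blast
  have step: "dist (f (n - i)) (f (n - Suc i)) = dist (f (n - Suc i)) (f (Suc (n - Suc i)))"
    if "i < n" for i
    using that by (simp add: Suc_diff_Suc dist_commute)
  show ?thesis
  proof (rule eps_chainI[of "\<lambda>i. f (n - i)"])
    show "f (n - 0) = y" "f (n - n) = x"
      using f(1,2) by simp_all
    show "f (n - i) \<in> K" for i
      using f(3) by simp
    show "dist (f (n - i)) (f (n - Suc i)) \<le> \<epsilon>" if "i < n" for i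
      using step[OF that] f(4)[of "n - Suc i"] that by simp
    have "(\<Sum>i<n. dist (f (n - i)) (f (n - Suc i))) = (\<Sum>i<n. dist (f i) (f (Suc i)))"
      using step sum.nat_diff_reindex[of "\<lambda>j. dist (f j) (f (Suc j))" n] by simp
    then show "(\<Sum>i<n. dist (f (n - i)) (f (n - Suc i))) \<le> S"
      using f(5) by simp
  qed
qed

lemma eps_chain_geodesic:
  assumes \<gamma>: "geodesic \<gamma> x y" and K: "\<gamma> ` {0..dist x y} \<subseteq> K" and \<epsilon>: "0 < \<epsilon>"
  shows "eps_chain K \<epsilon> x y (dist x y)"
proof -
  let ?d = "dist x y"
  obtain n :: nat where n: "?d / \<epsilon> < real n"
    using reals_Archimedean2 by blast
  have n_pos: "0 < real n"
    using n \<epsilon> by (smt (verit) divide_nonneg_pos zero_le_dist)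
  have mesh: "?d / real n \<le> \<epsilon>"
    using n n_pos \<epsilon> by (simp add: divide_le_eq field_simps)
  define f where "f i = \<gamma> (real i * ?d / real n)" for i
  have param: "real i * ?d / real n \<in> {0..?d}" if "i \<le> n" for i
    using that n_pos mult_right_mono[of "real i" "real n" ?d] by (auto simp: divide_le_eq mult.commute)
  have step: "dist (f i) (f (Suc i)) = ?d / real n" if "i < n" for i
  proof -
    have "real i * ?d / real n - real (Suc i) * ?d / real n = - (?d / real n)"
      by (simp add: field_simps add_divide_distrib)
    then show ?thesis
      using geodesic_dist[OF \<gamma> param[of i] param[of "Suc i"]] that n_pos unfolding f_def by simp
  qed
  show ?thesis
  proof (rule eps_chainI[of f])
    show "f 0 = x" "f n = y"
      using geodesic_start[OF \<gamma>] geodesic_end[OF \<gamma>] n_pos unfolding f_def by simp_all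
    show "f i \<in> K" if "i \<le> n" for i
      using param[OF that] K unfolding f_def by blast
    show "dist (f i) (f (Suc i)) \<le> \<epsilon>" if "i < n" for i
      using step[OF that] mesh by simp
    show "(\<Sum>i<n. dist (f i) (f (Suc i))) \<le> ?d"
      using step n_pos by simp
  qed
qed

lemma curve_length_partition:
  assumes "t 0 = 0" "t n = 1" "\<And>i. i < n \<Longrightarrow> t i \<le> t (Suc i)"
  shows "ereal (\<Sum>i<n. dist (c (t i)) (c (t (Suc i)))) \<le> curve_length c"
  unfolding curve_length_def by (rule SUP_upper2[of "(n, t)"]) (use assms in auto)

lemma curve_length_nonneg: "0 \<le> curve_length c"
proof -
  have "ereal (dist (c 0) (c 1)) \<le> curve_length c"
    using curve_length_partition[of "\<lambda>i. if i = 0 then 0 else 1" 1 c] by simp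
  then show ?thesis
    by (rule order_trans[rotated]) simp
qed

lemma eps_chain_curve:
  assumes c: "continuous_on {0..1} c" and K: "c ` {0..1} \<subseteq> K"
    and L: "curve_length c = ereal L" and \<epsilon>: "0 < \<epsilon>"
  shows "eps_chain K \<epsilon> (c 0) (c 1) L"
proof -
  obtain r where r: "0 < r" "\<forall>s\<in>{0..1}. \<forall>s'\<in>{0..1}. dist s' s < r \<longrightarrow> dist (c s') (c s) < \<epsilon>"
    using compact_uniformly_continuous[OF c] \<epsilon> unfolding uniformly_continuous_on_def by force
  obtain n :: nat where n: "1 / r < real n"
    using reals_Archimedean2 by blast
  have n_pos: "0 < real n"
    using n r by (smt (verit) divide_pos_pos)
  have mesh: "1 / real n < r"
    using n r n_pos by (simp add: divide_less_eq field_simps)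
  define t where "t i = real i / real n" for i
  have t: "t i \<in> {0..1}" if "i \<le> n" for i
    using that n_pos unfolding t_def by auto
  have step: "dist (c (t i)) (c (t (Suc i))) \<le> \<epsilon>" if "i < n" for i
  proof -
    have "dist (t (Suc i)) (t i) < r"
      using mesh n_pos unfolding t_def dist_real_def by (simp add: field_simps)
    then have "dist (c (t (Suc i))) (c (t i)) < \<epsilon>"
      using r(2) t[of i] t[of "Suc i"] that by auto
    then show ?thesis
      by (simp add: dist_commute)
  qed
  show ?thesis
  proof (rule eps_chainI[of "\<lambda>i. c (t i)"])
    show "c (t 0) = c 0" "c (t n) = c 1"
      using n_pos unfolding t_def by simp_all
    show "c (t i) \<in> K" if "i \<le> n" for i
      using t[OF that] K by blast
    show "dist (c (t i)) (c (t (Suc i))) \<le> \<epsilon>" if "i < n" for i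
      using step[OF that] .
    have "ereal (\<Sum>i<n. dist (c (t i)) (c (t (Suc i)))) \<le> curve_length c"
      by (rule curve_length_partition) (use n_pos in \<open>auto simp: t_def divide_right_mono\<close>)
    then show "(\<Sum>i<n. dist (c (t i)) (c (t (Suc i)))) \<le> L"
      using L by simp
  qed
qed

section \<open>Paths are logarithmically close to geodesics\<close>

lemma dist_le_sum_dist_steps:
  "lo \<le> hi \<Longrightarrow> dist (f lo) (f hi) \<le> (\<Sum>i=lo..<hi. dist (f i) (f (Suc i)))"
proof (induction hi rule: dec_induct)
  case (step n)
  then show ?case
    using dist_triangle[of "f lo" "f (Suc n)" "f n"] by (simp add: sum.atLeastLessThan_Suc)
qed simp

lemma sum_split_near_half:
  fixes d :: "nat \<Rightarrow> real"
  assumes "lo \<le> hi" "0 \<le> \<epsilon>" "\<And>i. 0 \<le> d i" "\<And>i. lo \<le> i \<Longrightarrow> i < hi \<Longrightarrow> d i \<le> \<epsilon>"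
  obtains m where "lo \<le> m" "m \<le> hi" "(\<Sum>i=lo..<m. d i) \<le> (\<Sum>i=lo..<hi. d i) / 2"
    "(\<Sum>i=m..<hi. d i) \<le> (\<Sum>i=lo..<hi. d i) / 2 + \<epsilon>"
proof -
  define \<Sigma> where "\<Sigma> = (\<Sum>i=lo..<hi. d i)"
  define M where "M = {k\<in>{lo..hi}. (\<Sum>i=lo..<k. d i) \<le> \<Sigma> / 2}"
  define m where "m = Max M"
  have "0 \<le> \<Sigma>"
    unfolding \<Sigma>_def using assms(3) by (simp add: sum_nonneg)
  then have "lo \<in> M"
    unfolding M_def using assms(1) by simp
  then have "m \<in> M"
    unfolding m_def M_def by (intro Max_in) auto
  then have m: "lo \<le> m" "m \<le> hi" "(\<Sum>i=lo..<m. d i) \<le> \<Sigma> / 2"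
    unfolding M_def by auto
  have split: "(\<Sum>i=lo..<m. d i) + (\<Sum>i=m..<hi. d i) = \<Sigma>"
    unfolding \<Sigma>_def using sum.atLeastLessThan_concat[OF m(1,2)] by simp
  have "(\<Sum>i=m..<hi. d i) \<le> \<Sigma> / 2 + \<epsilon>"
  proof (cases "m = hi")
    case True
    then show ?thesis
      using \<open>0 \<le> \<Sigma>\<close> assms(2) by simp
  next
    case False
    have "Suc m \<notin> M"
    proof
      assume "Suc m \<in> M"
      then have "Suc m \<le> m"
        unfolding m_def by (rule Max_ge[rotated]) (simp add: M_def)
      then show False
        by simp
    qed
    then have "\<Sigma> / 2 < (\<Sum>i=lo..<Suc m. d i)"
      using m False unfolding M_def by auto
    then have "\<Sigma> / 2 < (\<Sum>i=lo..<m. d i) + d m"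
      using m(1) by (simp add: sum.atLeastLessThan_Suc)
    then show ?thesis
      using split assms(4)[of m] m False by linarith
  qed
  then show ?thesis
    using that m unfolding \<Sigma>_def by blast
qed

lemma bisection_error_step:
  fixes \<Sigma> S \<delta> \<epsilon> :: real
  assumes "\<Sigma> \<le> S" "0 \<le> \<epsilon>"
  shows "\<delta> + (real N * \<delta> + (\<Sigma> / 2 + \<epsilon>) / 2^(N+1) + real N * \<epsilon>)
    \<le> real (Suc N) * \<delta> + S / 2^(Suc N + 1) + real (Suc N) * \<epsilon>"
proof -
  have "\<Sigma> / 2^(Suc N + 1) \<le> S / 2^(Suc N + 1)"
    using assms(1) by (simp add: divide_right_mono)
  moreover have "\<epsilon> / 2^(N+1) \<le> \<epsilon>"
    using assms(2) one_le_power[of "2::real" "N+1"] by (simp add: divide_le_eq mult_le_cancel_left1)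
  ultimately have "(\<Sigma> / 2 + \<epsilon>) / 2^(N+1) \<le> S / 2^(Suc N + 1) + \<epsilon>"
    by (simp add: add_divide_distrib)
  then show ?thesis
    by (simp add: algebra_simps)
qed

lemma geodesic_near_chain:
  fixes f :: "nat \<Rightarrow> 'a::metric_space"
  assumes hyp: "delta_hyperbolic TYPE('a) \<delta>" and \<epsilon>: "0 \<le> \<epsilon>"
    and "lo \<le> hi" "\<And>i. lo \<le> i \<Longrightarrow> i < hi \<Longrightarrow> dist (f i) (f (Suc i)) \<le> \<epsilon>"
    and "(\<Sum>i=lo..<hi. dist (f i) (f (Suc i))) \<le> S"
    and "geodesic \<alpha> (f lo) (f hi)" "0 \<le> t" "t \<le> dist (f lo) (f hi)"
  shows "\<exists>i\<in>{lo..hi}. dist (\<alpha> t) (f i) \<le> real N * \<delta> + S / 2^(N+1) + real N * \<epsilon>"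
  using assms(3-)
proof (induction N arbitrary: lo hi \<alpha> t S)
  case (0 lo hi \<alpha> t S)
  have "dist (f lo) (f hi) \<le> S"
    using dist_le_sum_dist_steps[OF 0(1), of f] 0(3) by linarith
  moreover have "dist (\<alpha> t) (f lo) = t" "dist (\<alpha> t) (f hi) = dist (f lo) (f hi) - t"
    using geodesic_dist_start[OF 0(4-6)] geodesic_dist_end[OF 0(4-6)] by simp_all
  ultimately show ?case
    using 0(1) by (cases "t \<le> dist (f lo) (f hi) / 2") (auto intro: bexI[of _ lo] bexI[of _ hi])
next
  case (Suc N lo hi \<alpha> t S)
  define \<Sigma> where "\<Sigma> = (\<Sum>i=lo..<hi. dist (f i) (f (Suc i)))"
  obtain m where m: "lo \<le> m" "m \<le> hi"
    "(\<Sum>i=lo..<m. dist (f i) (f (Suc i))) \<le> \<Sigma> / 2 + \<epsilon>"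
    "(\<Sum>i=m..<hi. dist (f i) (f (Suc i))) \<le> \<Sigma> / 2 + \<epsilon>"
    using sum_split_near_half[OF Suc.prems(1) \<epsilon>, of "\<lambda>i. dist (f i) (f (Suc i))"] Suc.prems(2) \<epsilon>
    unfolding \<Sigma>_def by (smt (verit) zero_le_dist)
  have bound: "\<delta> + (real N * \<delta> + (\<Sigma> / 2 + \<epsilon>) / 2^(N+1) + real N * \<epsilon>)
      \<le> real (Suc N) * \<delta> + S / 2^(Suc N + 1) + real (Suc N) * \<epsilon>"
    using bisection_error_step[OF Suc.prems(3)[folded \<Sigma>_def] \<epsilon>] .
  have near_half: "\<exists>i\<in>{lo..hi}. dist (\<alpha> t) (f i) \<le> real (Suc N) * \<delta> + S / 2^(Suc N + 1) + real (Suc N) * \<epsilon>"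
    if lh: "lo \<le> l" "l \<le> h" "h \<le> hi" "(\<Sum>i=l..<h. dist (f i) (f (Suc i))) \<le> \<Sigma> / 2 + \<epsilon>"
      and \<beta>: "geodesic \<beta> (f l) (f h)" "0 \<le> s" "s \<le> dist (f l) (f h)" "dist (\<alpha> t) (\<beta> s) \<le> \<delta>"
    for l h \<beta> s
  proof -
    obtain i where i: "i \<in> {l..h}"
      "dist (\<beta> s) (f i) \<le> real N * \<delta> + (\<Sigma> / 2 + \<epsilon>) / 2^(N+1) + real N * \<epsilon>"
      using Suc.IH[OF lh(2) _ lh(4) \<beta>(1-3)] Suc.prems(2) lh(1,3) by force
    then show ?thesis
      using dist_triangle[of "\<alpha> t" "f i" "\<beta> s"] \<beta>(4) bound lh(1,3) by (intro bexI[of _ i]) auto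
  qed
  obtain \<alpha>1 \<alpha>2 where \<alpha>1: "geodesic \<alpha>1 (f lo) (f m)" and \<alpha>2: "geodesic \<alpha>2 (f m) (f hi)"
    using delta_hyperbolic_geodesic_exists[OF hyp] by metis
  show ?case
    using delta_hyperbolic_slim[OF hyp Suc.prems(4) \<alpha>1 \<alpha>2 Suc.prems(5,6)]
  proof
    assume "\<exists>s\<in>{0..dist (f lo) (f m)}. dist (\<alpha> t) (\<alpha>1 s) \<le> \<delta>"
    then show ?thesis
      using near_half[OF order_refl m(1) m(2) m(3) \<alpha>1] by auto
  next
    assume "\<exists>s\<in>{0..dist (f m) (f hi)}. dist (\<alpha> t) (\<alpha>2 s) \<le> \<delta>"
    then show ?thesis
      using near_half[OF m(1) m(2) order_refl m(4) \<alpha>2] by auto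
  qed
qed

lemma eps_chain_outside_ball_bisection_bound:
  fixes a :: "'a::metric_space"
  assumes hyp: "delta_hyperbolic TYPE('a) \<delta>" and \<epsilon>: "0 \<le> \<epsilon>"
    and \<alpha>: "geodesic \<alpha> x y" and tp: "0 \<le> tp" "tp \<le> dist x y" and near: "dist (\<alpha> tp) a \<le> 1"
    and chain: "eps_chain (- ball a R) \<epsilon> x y S"
  shows "R - 1 \<le> real N * \<delta> + S / 2^(N+1) + real N * \<epsilon>"
proof -
  obtain f n where f: "f 0 = x" "f n = y" "\<And>i. i \<le> n \<Longrightarrow> f i \<in> - ball a R"
    "\<And>i. i < n \<Longrightarrow> dist (f i) (f (Suc i)) \<le> \<epsilon>" "(\<Sum>i<n. dist (f i) (f (Suc i))) \<le> S"
    using chain by (rule eps_chainE) blast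
  obtain i where i: "i \<le> n" "dist (\<alpha> tp) (f i) \<le> real N * \<delta> + S / 2^(N+1) + real N * \<epsilon>"
    using geodesic_near_chain[OF hyp \<epsilon> le0, of n f S \<alpha> tp N] f \<alpha> tp
    by (auto simp: atLeast0LessThan)
  have "R \<le> dist a (f i)"
    using f(3)[OF i(1)] by simp
  also have "\<dots> \<le> dist a (\<alpha> tp) + dist (\<alpha> tp) (f i)"
    by (rule dist_triangle)
  finally show ?thesis
    using near i(2) by (simp add: dist_commute)
qed

text \<open>Take N = \<lceil>(R - 2) / \<delta>\<rceil> - 1, so that N \<delta> < R - 2 and S / 2^(N+1) > 1.\<close>

lemma two_powr_le_of_bisection_bounds:
  fixes \<delta> R S :: real
  assumes "0 < \<delta>" "2 < R" "\<And>N. R - 1 \<le> real N * \<delta> + S / 2^(N+1)"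
  shows "2 powr ((R - 2) / \<delta>) \<le> S"
proof -
  define z where "z = (R - 2) / \<delta>"
  have "0 < z"
    unfolding z_def using assms(1,2) by simp
  define N where "N = nat \<lceil>z\<rceil> - 1"
  have N: "z \<le> real (N + 1)" "real N < z"
    unfolding N_def using \<open>0 < z\<close> by linarith+
  have "real N * \<delta> < R - 2"
    using N(2) assms(1) unfolding z_def by (simp add: field_simps)
  then have "1 < S / 2^(N+1)"
    using assms(3)[of N] by linarith
  then have "2^(N+1) < S"
    by (simp add: field_simps)
  moreover have "2 powr z \<le> 2 powr real (N+1)"
    using N(1) by simp
  moreover have "2 powr real (N+1) = (2::real)^(N+1)"
    by (rule powr_realpow) simp
  ultimately show ?thesis
    unfolding z_def by linarith
qed

lemma eps_chains_outside_ball_length: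
  fixes a :: "'a::metric_space"
  assumes hyp: "delta_hyperbolic TYPE('a) \<delta>" and "0 < \<delta>" "2 < R"
    and \<alpha>: "geodesic \<alpha> x y" and tp: "0 \<le> tp" "tp \<le> dist x y" and near: "dist (\<alpha> tp) a \<le> 1"
    and chains: "\<And>\<epsilon>. 0 < \<epsilon> \<Longrightarrow> eps_chain (- ball a R) \<epsilon> x y S"
  shows "2 powr ((R - 2) / \<delta>) \<le> S"
proof (rule two_powr_le_of_bisection_bounds[OF assms(2,3)])
  fix N
  show "R - 1 \<le> real N * \<delta> + S / 2^(N+1)"
  proof (rule field_le_epsilon)
    fix e :: real
    assume "0 < e"
    then have "R - 1 \<le> real N * \<delta> + S / 2^(N+1) + real N * (e / (real N + 1))"
      by (intro eps_chain_outside_ball_bisection_bound[OF hyp _ \<alpha> tp near chains]) simp_all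
    moreover have "real N * (e / (real N + 1)) \<le> e"
      using \<open>0 < e\<close> by (simp add: field_simps)
    ultimately show "R - 1 \<le> real N * \<delta> + S / 2^(N+1) + e"
      by linarith
  qed
qed

lemma sphere_dist_ge_of_eps_chains:
  fixes a :: "'a::metric_space"
  assumes hyp: "delta_hyperbolic TYPE('a) \<delta>" and "0 < \<delta>" "2 < R"
    and \<alpha>: "geodesic \<alpha> x y" and tp: "0 \<le> tp" "tp \<le> dist x y" and near: "dist (\<alpha> tp) a \<le> 1"
    and to_u: "\<And>\<epsilon>. 0 < \<epsilon> \<Longrightarrow> eps_chain (- ball a R) \<epsilon> x u S1"
    and from_v: "\<And>\<epsilon>. 0 < \<epsilon> \<Longrightarrow> eps_chain (- ball a R) \<epsilon> v y S2"
  shows "ereal (2 powr ((R - 2) / \<delta>) - (S1 + S2)) \<le> sphere_dist R a u v"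
  unfolding sphere_dist_def
proof (rule INF_greatest, clarify)
  fix c :: "real \<Rightarrow> 'a"
  assume c: "continuous_on {0..1} c" "u = c 0" "v = c 1" "c ` {0..1} \<subseteq> - ball a R"
  show "ereal (2 powr ((R - 2) / \<delta>) - (S1 + S2)) \<le> curve_length c"
  proof (cases "curve_length c")
    case (real L)
    have "eps_chain (- ball a R) \<epsilon> x y (S1 + L + S2)" if "0 < \<epsilon>" for \<epsilon>
    proof -
      have "eps_chain (- ball a R) \<epsilon> u v L"
        using eps_chain_curve[OF c(1,4) real that] c(2,3) by simp
      then show ?thesis
        using eps_chain_append[OF eps_chain_append[OF to_u[OF that]] from_v[OF that]] by blast
    qed
    then have "2 powr ((R - 2) / \<delta>) \<le> S1 + L + S2"
      by (rule eps_chains_outside_ball_length[OF hyp assms(2,3) \<alpha> tp near])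
    then show ?thesis
      using real by simp
  next
    case MInf
    then show ?thesis
      using curve_length_nonneg[of c] by simp
  qed simp
qed

section \<open>The configuration around a rotation centre\<close>

lemma geodesic_through_near_centre_fellow_travels:
  fixes a :: "'a::metric_space"
  assumes hyp: "delta_hyperbolic TYPE('a) \<delta>"
    and \<beta>: "geodesic \<beta> b b'" and \<gamma>: "geodesic \<gamma> a b" and \<gamma>': "geodesic \<gamma>' a b'"
    and eq: "dist a b' = dist a b"
    and t0: "0 \<le> t0" "t0 \<le> dist b b'" and near: "dist (\<beta> t0) a \<le> 1"
    and s: "1 \<le> s" "s \<le> dist a b"
  shows "dist a b - s \<le> t0" "t0 \<le> dist b b' - (dist a b - s)"
    and "dist (\<beta> (dist a b - s)) (\<gamma> s) \<le> \<delta>"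
    and "dist (\<beta> (dist b b' - (dist a b - s))) (\<gamma>' s) \<le> \<delta>"
proof -
  define D E where "D = dist a b" and "E = dist b b'"
  have "D \<le> 1 + t0"
    using dist_triangle[of a b "\<beta> t0"] near geodesic_dist_start[OF \<beta> t0]
    unfolding D_def by (simp add: dist_commute)
  moreover have "D \<le> 1 + (E - t0)"
    using dist_triangle[of a b' "\<beta> t0"] near geodesic_dist_end[OF \<beta> t0] eq
    unfolding D_def E_def by (simp add: dist_commute)
  ultimately have t0_range: "D - s \<le> t0" "t0 \<le> E - (D - s)" and half: "D - s \<le> E / 2"
    using s(1) by linarith+
  then show "dist a b - s \<le> t0" "t0 \<le> dist b b' - (dist a b - s)"
    unfolding D_def E_def by simp_all
  have "gromov_product b a b' = E / 2" "gromov_product b' a b = E / 2"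
    using eq unfolding gromov_product_def D_def E_def by (simp_all add: dist_commute)
  then have "dist (\<gamma> (D - (D - s))) (\<beta> (D - s)) \<le> \<delta>"
    and "dist (\<gamma>' (D - (D - s))) (\<beta> (E - (D - s))) \<le> \<delta>"
    using delta_hyperbolic_thin[OF hyp geodesic_reverse[OF \<gamma>] \<beta>, of "D - s"]
      delta_hyperbolic_thin[OF hyp geodesic_reverse[OF \<gamma>'] geodesic_reverse[OF \<beta>], of "D - s"]
      s half eq unfolding D_def E_def by (simp_all add: dist_commute)
  then show "dist (\<beta> (dist a b - s)) (\<gamma> s) \<le> \<delta>"
    and "dist (\<beta> (dist b b' - (dist a b - s))) (\<gamma>' s) \<le> \<delta>"
    unfolding D_def E_def by (simp_all add: dist_commute)
qed

lemma eps_chain_radial: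
  assumes \<gamma>: "geodesic \<gamma> a b" and r: "0 \<le> R" "R \<le> r" "r \<le> r'" "r' \<le> dist a b" and \<epsilon>: "0 < \<epsilon>"
  shows "eps_chain (- ball a R) \<epsilon> (\<gamma> r) (\<gamma> r') (r' - r)"
proof -
  have len: "dist (\<gamma> r) (\<gamma> r') = r' - r"
    using geodesic_dist[OF \<gamma>, of r r'] r by simp
  have "dist a (\<gamma> (r + t)) = r + t" if "0 \<le> t" "t \<le> r' - r" for t
    using geodesic_dist_start[OF \<gamma>, of "r + t"] that r by (simp add: dist_commute)
  then have "(\<lambda>t. \<gamma> (r + t)) ` {0..dist (\<gamma> r) (\<gamma> r')} \<subseteq> - ball a R"
    using r len by auto
  then show ?thesis
    using eps_chain_geodesic[OF geodesic_subsegment[OF \<gamma> _ r(3,4)] _ \<epsilon>] r len by simp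
qed

lemma eps_chain_short_geodesic:
  assumes \<eta>: "geodesic \<eta> x q" and far: "R + dist x q \<le> dist a q" and \<epsilon>: "0 < \<epsilon>"
  shows "eps_chain (- ball a R) \<epsilon> x q (dist x q)"
proof (rule eps_chain_geodesic[OF \<eta> image_subsetI \<epsilon>])
  fix t
  assume "t \<in> {0..dist x q}"
  then have "dist (\<eta> t) q \<le> dist x q"
    using geodesic_dist_end[OF \<eta>] by simp
  then show "\<eta> t \<in> - ball a R"
    using dist_triangle[of a q "\<eta> t"] far by simp
qed

lemma sphere_dist_radial_points_ge:
  fixes a :: "'a::metric_space"
  assumes hyp: "delta_hyperbolic TYPE('a) \<delta>" and "0 < \<delta>" "2 < R"
    and \<gamma>: "geodesic \<gamma> a b" and \<gamma>': "geodesic \<gamma>' a b'" and eq: "dist a b' = dist a b"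
    and far: "R + \<delta> \<le> dist a b"
    and \<beta>: "geodesic \<beta> b b'" and t0: "0 \<le> t0" "t0 \<le> dist b b'" and near: "dist (\<beta> t0) a \<le> 1"
  shows "ereal (2 powr ((R - 2) / \<delta>) - 4 * \<delta>) \<le> sphere_dist R a (\<gamma> R) (\<gamma>' R)"
proof -
  define D E s where "D = dist a b" and "E = dist b b'" and "s = R + \<delta>"
  have s: "1 \<le> s" "s \<le> D"
    using assms(2,3) far unfolding s_def D_def by simp_all
  note fellow = geodesic_through_near_centre_fellow_travels[OF hyp \<beta> \<gamma> \<gamma>' eq t0 near s[unfolded D_def],
      folded D_def E_def]
  have "0 \<le> D - s" "D - s \<le> E - (D - s)" "E - (D - s) \<le> dist b b'"
    using s fellow(1,2) t0 unfolding E_def by linarith+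
  note \<alpha> = geodesic_subsegment[OF \<beta> this]
  have len: "dist (\<beta> (D - s)) (\<beta> (E - (D - s))) = E - (D - s) - (D - s)"
    using geodesic_dist[OF \<beta>, of "D - s" "E - (D - s)"] \<open>0 \<le> D - s\<close> \<open>D - s \<le> E - (D - s)\<close>
      \<open>E - (D - s) \<le> dist b b'\<close> by simp
  have on_sides: "dist a (\<gamma> s) = s" "dist a (\<gamma>' s) = s"
    using geodesic_dist_start[OF \<gamma>, of s] geodesic_dist_start[OF \<gamma>', of s] s eq
    unfolding D_def by (simp_all add: dist_commute)
  have short: "eps_chain (- ball a R) \<epsilon> p q \<delta>"
    if "dist p q \<le> \<delta>" "dist a q = s" "0 < \<epsilon>" for p q \<epsilon>
  proof -
    obtain \<eta> where "geodesic \<eta> p q"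
      using delta_hyperbolic_geodesic_exists[OF hyp] by blast
    then have "eps_chain (- ball a R) \<epsilon> p q (dist p q)"
      by (rule eps_chain_short_geodesic[OF _ _ that(3)]) (use that(1,2) in \<open>simp add: s_def\<close>)
    then show ?thesis
      using that(1) by (rule eps_chain_mono)
  qed
  have radial: "eps_chain (- ball a R) \<epsilon> (\<gamma> R) (\<gamma> s) \<delta>" "eps_chain (- ball a R) \<epsilon> (\<gamma>' R) (\<gamma>' s) \<delta>"
    if "0 < \<epsilon>" for \<epsilon>
    using eps_chain_radial[OF \<gamma>, of R R s \<epsilon>] eps_chain_radial[OF \<gamma>', of R R s \<epsilon>]
      that assms(2,3) s eq unfolding s_def D_def by simp_all
  have "ereal (2 powr ((R - 2) / \<delta>) - (2 * \<delta> + 2 * \<delta>)) \<le> sphere_dist R a (\<gamma> R) (\<gamma>' R)"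
  proof (rule sphere_dist_ge_of_eps_chains[OF hyp assms(2,3) \<alpha>])
    show "0 \<le> t0 - (D - s)" "t0 - (D - s) \<le> dist (\<beta> (D - s)) (\<beta> (E - (D - s)))"
      using fellow(1,2) len by simp_all
    show "dist (\<beta> (D - s + (t0 - (D - s)))) a \<le> 1"
      using near by simp
    show "eps_chain (- ball a R) \<epsilon> (\<beta> (D - s)) (\<gamma> R) (2 * \<delta>)" if "0 < \<epsilon>" for \<epsilon>
      using eps_chain_append[OF short[OF fellow(3) on_sides(1) that] eps_chain_sym[OF radial(1)[OF that]]]
      by simp
    show "eps_chain (- ball a R) \<epsilon> (\<gamma>' R) (\<beta> (E - (D - s))) (2 * \<delta>)" if "0 < \<epsilon>" for \<epsilon>
      using eps_chain_append[OF radial(2)[OF that] eps_chain_sym[OF short[OF fellow(4) on_sides(2) that]]]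
      by simp
  qed
  then show ?thesis
    by simp
qed

lemma geodesic_point_in_proj:
  assumes "geodesic \<gamma> p x" "0 \<le> R" "R \<le> dist p x"
  shows "\<gamma> R \<in> proj R p x"
  using assms geodesic_dist_start[OF assms] unfolding proj_def sphere_set_def by (auto simp: dist_commute)

lemma sphere_dist_le_proj_dist:
  assumes "u \<in> proj R p x" "v \<in> proj R p y"
  shows "sphere_dist R p u v \<le> proj_dist R p x y"
  unfolding proj_dist_def Let_def using assms by (intro SUP_upper2[of u] SUP_upper2[of v]) auto

lemma fairly_rotating_family_rotation:
  assumes "isometric_action G act" and frf: "fairly_rotating_family G act C Gc \<rho>"
    and "a \<in> C" "b \<in> C" "a \<noteq> b" "g \<in> Gc a" "g \<noteq> \<one>\<^bsub>G\<^esub>"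
  shows "dist (act g x) (act g y) = dist x y" and "act g a = a" and "\<rho> \<le> dist a b"
    and "\<exists>\<beta> t. geodesic \<beta> b (act g b) \<and> 0 \<le> t \<and> t \<le> dist b (act g b) \<and> dist (\<beta> t) a \<le> 1"
proof -
  have "subgroup (Gc a) G"
    using frf assms(3) unfolding fairly_rotating_family_def by blast
  then have "g \<in> carrier G"
    using assms(6) subgroup.subset by blast
  then show "dist (act g x) (act g y) = dist x y"
    using assms(1) unfolding isometric_action_def by blast
  show "act g a = a"
    using frf assms(3,6) unfolding fairly_rotating_family_def by blast
  show "\<rho> \<le> dist a b"
    using frf assms(3-5) unfolding fairly_rotating_family_def by blast
  have "\<exists>\<beta>. geodesic \<beta> b (act g b) \<and> (\<exists>t\<in>{0..dist b (act g b)}. dist (\<beta> t) a \<le> 1)"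
    using frf assms(3-7) unfolding fairly_rotating_family_def by blast
  then show "\<exists>\<beta> t. geodesic \<beta> b (act g b) \<and> 0 \<le> t \<and> t \<le> dist b (act g b) \<and> dist (\<beta> t) a \<le> 1"
    by force
qed

theorem lemma3p7:
  fixes G :: "('g, 'b) monoid_scheme" and act :: "'g \<Rightarrow> 'a::metric_space \<Rightarrow> 'a"
    and C :: "'a set" and Gc :: "'a \<Rightarrow> 'g set"
    and \<delta> \<rho> R :: real and a b :: 'a and g :: 'g
  assumes "\<delta> > 0" and "delta_hyperbolic TYPE('a) \<delta>"
    and "isometric_action G act"
    and "fairly_rotating_family G act C Gc \<rho>" and "\<rho> \<ge> 20 * \<delta>"
    and "2 + 2 * \<delta> \<le> R" and "R \<le> \<rho> / 2 - 3 * \<delta>"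
    and "a \<in> C" and "b \<in> C" and "a \<noteq> b"
    and "g \<in> Gc a" and "g \<noteq> \<one>\<^bsub>G\<^esub>"
  shows "proj_dist R a b (act g b) \<ge> ereal (2 powr ((R - 2) / \<delta>) - 4 - 6 * \<delta>)"
proof -
  note rotation = fairly_rotating_family_rotation[OF assms(3,4,8-12)]
  note iso = rotation(1) and fix_a = rotation(2) and sep = rotation(3)
  obtain \<beta> t0 where \<beta>: "geodesic \<beta> b (act g b)" "0 \<le> t0" "t0 \<le> dist b (act g b)"
    "dist (\<beta> t0) a \<le> 1"
    using rotation(4) by blast
  obtain \<gamma> where \<gamma>: "geodesic \<gamma> a b"
    using delta_hyperbolic_geodesic_exists[OF assms(2)] by blast
  have \<gamma>': "geodesic (\<lambda>t. act g (\<gamma> t)) a (act g b)"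
    using geodesic_isometric_image[OF \<gamma> iso] fix_a by simp
  have "ereal (2 powr ((R - 2) / \<delta>) - 4 * \<delta>) \<le> sphere_dist R a (\<gamma> R) (act g (\<gamma> R))"
    using sphere_dist_radial_points_ge[OF assms(2,1) _ \<gamma> \<gamma>' _ _ \<beta>] iso[of a b] fix_a sep assms(1,5-7)
    by simp
  also have "\<dots> \<le> proj_dist R a b (act g b)"
    using geodesic_point_in_proj[OF \<gamma>] geodesic_point_in_proj[OF \<gamma>'] iso[of a b] fix_a sep assms(1,5-7)
    by (intro sphere_dist_le_proj_dist) simp_all
  finally show ?thesis
    \<comment> \<open>the argument gives the sharper loss 4\<delta> in place of 4 + 6\<delta>\<close>
    by (rule order_trans[rotated]) (use assms(1) in simp)
qed

end
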